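(* Suppose $\beta_-\ne0$ and $\gamma_->0$, and let $J\subset]0,b[$ be an interval. 1. If $\beta_-<0$ and the curve $\overline\Delta(x,y)=0$ lies above (resp. below) the curve $y=\Pi(x)$ for all $x\in J$, then $\Delta(x)>0$ and $\tilde I'(x)>0$ (resp. $\Delta(x)<0$ and $\tilde I'(x)<0$) for all $x\in J$. 2. If $\beta_->0$ and the curve $\overline\Delta(x,y)=0$ lies above (resp. below) the curve $y=\Pi(x)$ for all $x\in J$, then $\Delta(x)<0$ and $\tilde I'(x)<0$ (resp. $\Delta(x)>0$ and $\tilde I'(x)>0$) for all $x\in J$.
   Context: Real parameters $B,\alpha_+,\beta_+,\gamma_+,\delta_+,\beta_-,\gamma_-$ with $B>\delta_+>0$. $Z^-(x,y)=(-1+\beta_- y,\,-x+\gamma_- y)$, $X^{sl}(u)=\frac{1}{1+\delta_+}(B-\delta_++\alpha_+u)$, and $x^*=-(B-\delta_+)/\alpha_+$ when $\alpha_+\ne0$. Poincaré half-map $\Pi$: for $x>0$, $(\Pi(x),0)$ with $\Pi(x)<0$ is the first return to $\{y=0\}$ of the forward $Z^-$-orbit through $(x,0)$; $\Pi(0)=0$. $[0,b[$ is the largest interval of this form in the domain of $\Pi$ such that $X^{sl}>0$ on $[\Pi(x),x]$ for all $x\in[0,b[$. Define $\tilde I(x)=\int_{\Pi(x)}^x\frac{u\,du}{X^{sl}(u)}$ on $[0,b[$, $\overline\Delta(x,y)=\alpha_+\beta_-xy+\beta_-(B-\delta_+)(x+y)-\alpha_+-\gamma_-(B-\delta_+)$,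 and $\Delta(x)=\overline\Delta(x,\Pi(x))$. "The curve $\overline\Delta=0$ lies above (below) $y=\Pi(x)$ for $x\in J$" means: for each $x\in J$, every $y$ with $\overline\Delta(x,y)=0$ satisfies $y>\Pi(x)$ (resp. $y<\Pi(x)$). *)

theory Defs
  imports "HOL-Analysis.Analysis"
begin

definition Zm :: "real \<Rightarrow> real \<Rightarrow> real \<times> real \<Rightarrow> real \<times> real" where
  "Zm bm gm p = (-1 + bm * snd p, - fst p + gm * snd p)"

definition first_return :: "real \<Rightarrow> real \<Rightarrow> real \<Rightarrow> real \<Rightarrow> bool" where
  "first_return bm gm x y \<longleftrightarrow> y < 0 \<and>
     (\<exists>(\<phi>::real \<Rightarrow> real \<times> real) t. 0 < t \<and> \<phi> 0 = (x, 0) \<and> \<phi> t = (y, 0) \<and>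
        (\<forall>s\<in>{0..t}. (\<phi> has_vector_derivative Zm bm gm (\<phi> s)) (at s within {0..t})) \<and>
        (\<forall>s\<in>{0<..<t}. snd (\<phi> s) \<noteq> 0))"

definition PiDom :: "real \<Rightarrow> real \<Rightarrow> real set" where
  "PiDom bm gm = {x. x = 0 \<or> (0 < x \<and> (\<exists>y. first_return bm gm x y))}"

definition Pi :: "real \<Rightarrow> real \<Rightarrow> real \<Rightarrow> real" where
  "Pi bm gm x = (if x = 0 then 0 else (THE y. first_return bm gm x y))"

definition Xsl :: "real \<Rightarrow> real \<Rightarrow> real \<Rightarrow> real \<Rightarrow> real" where
  "Xsl B ap dp u = (B - dp + ap * u) / (1 + dp)"

definition goodset :: "real \<Rightarrow> real \<Rightarrow> real \<Rightarrow> real \<Rightarrow> real \<Rightarrow> real set" where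
  "goodset B ap dp bm gm =
     {x \<in> PiDom bm gm. \<forall>u\<in>{Pi bm gm x..x}. 0 < Xsl B ap dp u}"

text \<open>Membership in ]0,b[, where [0,b[ is the largest interval of the form [0,c[
  (c possibly +infinity) contained in the good set.\<close>
definition in_zero_b :: "real \<Rightarrow> real \<Rightarrow> real \<Rightarrow> real \<Rightarrow> real \<Rightarrow> real \<Rightarrow> bool" where
  "in_zero_b B ap dp bm gm x \<longleftrightarrow>
     0 < x \<and> (\<exists>c > x. {0..<c} \<subseteq> goodset B ap dp bm gm)"

definition Itilde :: "real \<Rightarrow> real \<Rightarrow> real \<Rightarrow> real \<Rightarrow> real \<Rightarrow> real \<Rightarrow> real" where
  "Itilde B ap dp bm gm x = integral {Pi bm gm x..x} (\<lambda>u. u / Xsl B ap dp u)"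

definition Deltabar :: "real \<Rightarrow> real \<Rightarrow> real \<Rightarrow> real \<Rightarrow> real \<Rightarrow> real \<Rightarrow> real \<Rightarrow> real" where
  "Deltabar B ap dp bm gm x y =
     ap * bm * x * y + bm * (B - dp) * (x + y) - ap - gm * (B - dp)"

definition Delta :: "real \<Rightarrow> real \<Rightarrow> real \<Rightarrow> real \<Rightarrow> real \<Rightarrow> real \<Rightarrow> real" where
  "Delta B ap dp bm gm x = Deltabar B ap dp bm gm x (Pi bm gm x)"

end

theory Submission
  imports Defs
begin

text \<open>\<open>Z\<^sup>-\<close> is linear, so its orbit through \<open>(x, 0)\<close> is explicit in terms of a generalized
  sine and cosine, and the half-map \<open>Pi\<close> is differentiable: the return time is an inverse
  function, and \<open>Pi x * Pi' x = x * W (Pi x) / W x\<close> with \<open>W u = Wpoly bm gm u = bm u^2 - gm u + 1\<close>.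
  Here \<open>W x > 0\<close>, because a root \<open>r\<close> of \<open>W\<close> in \<open>]0, x]\<close> would give an invariant line of
  \<open>Z\<^sup>-\<close> through \<open>(r, 0)\<close> separating \<open>(x, 0)\<close> from the negative half-axis.
  Differentiating the integral then gives
  \<open>(1 + dp) Xsl(x) Xsl(Pi x) W(x) Itilde'(x) = x (x - Pi x) Delta(x)\<close>,
  so \<open>Itilde'\<close> has the sign of \<open>Delta\<close>. Finally \<open>Deltabar(x, _)\<close> is affine with slope
  \<open>bm (1 + dp) Xsl(x)\<close>, so \<open>Delta(x) = Deltabar(x, Pi x)\<close> has the sign of \<open>bm\<close> when the zero of
  \<open>Deltabar(x, _)\<close> lies below \<open>Pi x\<close> and the opposite sign when it lies above.\<close>

section \<open>Generalized sine and cosine\<close>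

lemma sine_cosine_pair_exists:
  "\<exists>\<sigma> c. \<sigma> 0 = 0 \<and> c 0 = 1 \<and> (\<forall>s. (\<sigma> has_real_derivative c s) (at s)) \<and>
     (\<forall>s. (c has_real_derivative k * \<sigma> s) (at s))"
proof (cases k "0::real" rule: linorder_cases)
  case less
  define w where "w = sqrt (- k)"
  have w: "w > 0" "k = - (w * w)" using less by (auto simp: w_def)
  show ?thesis
    by (rule exI[of _ "\<lambda>s. sin (w * s) / w"], rule exI[of _ "\<lambda>s. cos (w * s)"])
      (use w in \<open>auto intro!: derivative_eq_intros simp: field_simps\<close>)
next
  case equal
  show ?thesis
    by (rule exI[of _ "\<lambda>s. s"], rule exI[of _ "\<lambda>s. 1"])
      (use equal in \<open>auto intro!: derivative_eq_intros\<close>)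
next
  case greater
  define w where "w = sqrt k"
  have w: "w > 0" "k = w * w" using greater by (auto simp: w_def)
  show ?thesis
    by (rule exI[of _ "\<lambda>s. sinh (w * s) / w"], rule exI[of _ "\<lambda>s. cosh (w * s)"])
      (use w in \<open>auto intro!: derivative_eq_intros simp: field_simps\<close>)
qed

definition gsin_gcos_spec :: "real \<Rightarrow> real \<Rightarrow> (real \<Rightarrow> real) \<Rightarrow> (real \<Rightarrow> real) \<Rightarrow> bool" where
  "gsin_gcos_spec b g S C \<longleftrightarrow> S 0 = 0 \<and> C 0 = 1 \<and> (\<forall>s. (S has_real_derivative C s) (at s)) \<and>
     (\<forall>s. (C has_real_derivative g * C s - b * S s) (at s))"

lemma gsin_gcos_spec_exists: "\<exists>S C. gsin_gcos_spec b g S C"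
proof -
  obtain \<sigma> c where \<sigma>: "\<sigma> 0 = 0" "c 0 = 1" "\<And>s. (\<sigma> has_real_derivative c s) (at s)"
    "\<And>s. (c has_real_derivative (g * g / 4 - b) * \<sigma> s) (at s)"
    using sine_cosine_pair_exists[of "g * g / 4 - b"] by blast
  show ?thesis
    unfolding gsin_gcos_spec_def
    by (rule exI[of _ "\<lambda>s. exp (g * s / 2) * \<sigma> s"],
        rule exI[of _ "\<lambda>s. exp (g * s / 2) * (g / 2 * \<sigma> s + c s)"])
      (use \<sigma> in \<open>auto intro!: derivative_eq_intros simp: field_simps\<close>)
qed

definition gsin :: "real \<Rightarrow> real \<Rightarrow> real \<Rightarrow> real" where
  "gsin b g = fst (SOME (S, C). gsin_gcos_spec b g S C)"

definition gcos :: "real \<Rightarrow> real \<Rightarrow> real \<Rightarrow> real" where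
  "gcos b g = snd (SOME (S, C). gsin_gcos_spec b g S C)"

lemma gsin_gcos_spec: "gsin_gcos_spec b g (gsin b g) (gcos b g)"
proof -
  have "case (SOME (S, C). gsin_gcos_spec b g S C) of (S, C) \<Rightarrow> gsin_gcos_spec b g S C"
    using gsin_gcos_spec_exists by (intro someI_ex[where P = "case_prod (gsin_gcos_spec b g)"]) auto
  then show ?thesis unfolding gsin_def gcos_def by (simp add: case_prod_beta)
qed

lemma gsin_0 [simp]: "gsin b g 0 = 0"
  and gcos_0 [simp]: "gcos b g 0 = 1"
  and has_real_derivative_gsin: "(gsin b g has_real_derivative gcos b g s) (at s)"
  and has_real_derivative_gcos: "(gcos b g has_real_derivative g * gcos b g s - b * gsin b g s) (at s)"
  using gsin_gcos_spec unfolding gsin_gcos_spec_def by blast+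

lemma isCont_gsin: "isCont (gsin b g) s"
  and isCont_gcos: "isCont (gcos b g) s"
  by (metis DERIV_isCont has_real_derivative_gsin) (metis DERIV_isCont has_real_derivative_gcos)

section \<open>The orbit of \<open>Z\<^sup>-\<close> through \<open>(x, 0)\<close> and its first return\<close>

text \<open>The second component \<open>v\<close> solves \<open>v'' = g v' - b v\<close>, \<open>v 0 = 0\<close>, \<open>v' 0 = - x\<close>;
  the first is \<open>g v - v'\<close>.\<close>

definition orbit_snd :: "real \<Rightarrow> real \<Rightarrow> real \<Rightarrow> real \<Rightarrow> real" where
  "orbit_snd b g x s = (1 - gcos b g s + g * gsin b g s) / b - x * gsin b g s"

definition orbit_fst :: "real \<Rightarrow> real \<Rightarrow> real \<Rightarrow> real \<Rightarrow> real" where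
  "orbit_fst b g x s = g * orbit_snd b g x s - gsin b g s + x * gcos b g s"

lemma orbit_fst_0 [simp]: "orbit_fst b g x 0 = x"
  and orbit_snd_0 [simp]: "orbit_snd b g x 0 = 0"
  by (simp_all add: orbit_fst_def orbit_snd_def)

lemma has_real_derivative_orbit_snd:
  "b \<noteq> 0 \<Longrightarrow> (orbit_snd b g x has_real_derivative gsin b g s - x * gcos b g s) (at s)"
  unfolding orbit_snd_def [abs_def]
  by (auto intro!: derivative_eq_intros has_real_derivative_gsin has_real_derivative_gcos
      simp: field_simps)

lemma has_real_derivative_orbit_snd':
  "b \<noteq> 0 \<Longrightarrow>
    (orbit_snd b g x has_real_derivative g * orbit_snd b g x s - orbit_fst b g x s) (at s)"
  using has_real_derivative_orbit_snd[of b g x s] by (simp add: orbit_fst_def)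

lemma has_real_derivative_orbit_fst:
  "b \<noteq> 0 \<Longrightarrow> (orbit_fst b g x has_real_derivative -1 + b * orbit_snd b g x s) (at s)"
  unfolding orbit_fst_def [abs_def]
  by (auto intro!: derivative_eq_intros has_real_derivative_orbit_snd has_real_derivative_gsin
      has_real_derivative_gcos simp: orbit_snd_def field_simps)

lemma continuous_on_orbit_snd: "b \<noteq> 0 \<Longrightarrow> continuous_on A (orbit_snd b g x)"
  by (metis DERIV_isCont continuous_at_imp_continuous_on has_real_derivative_orbit_snd)

lemma orbit_snd_shift: "orbit_snd b g x' s = orbit_snd b g x s - (x' - x) * gsin b g s"
  by (simp add: orbit_snd_def algebra_simps)

lemma linear_energy_bound:
  fixes b g p q :: real
  shows "2 * p * (b * q) + 2 * q * (- p + g * q) \<le> (2 * \<bar>b\<bar> + 2 * \<bar>g\<bar> + 2) * (p * p + q * q)"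
proof -
  have pq: "2 * \<bar>p * q\<bar> \<le> p * p + q * q"
    using sum_squares_bound[of "\<bar>p\<bar>" "\<bar>q\<bar>"] by (simp add: abs_mult power2_eq_square)
  have "2 * p * (b * q) \<le> \<bar>b\<bar> * (2 * \<bar>p * q\<bar>)"
    by (simp add: abs_mult) (metis abs_ge_self abs_mult mult.left_commute)
  also have "\<dots> \<le> \<bar>b\<bar> * (p * p + q * q)" using pq by (simp add: mult_left_mono)
  finally have b_term: "2 * p * (b * q) \<le> \<bar>b\<bar> * (p * p + q * q)" .
  have "g * (q * q) \<le> \<bar>g\<bar> * (q * q)" by (simp add: mult_right_mono)
  also have "\<dots> \<le> \<bar>g\<bar> * (p * p + q * q)" by (simp add: mult_left_mono)
  finally have g_term: "g * (q * q) \<le> \<bar>g\<bar> * (p * p + q * q)" .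
  have pq_term: "- 2 * (p * q) \<le> p * p + q * q" using pq by linarith
  have "0 \<le> \<bar>b\<bar> * (p * p + q * q)" "0 \<le> p * p + q * q" by simp_all
  moreover have "2 * p * (b * q) + 2 * q * (- p + g * q) = 2 * p * (b * q) - 2 * (p * q) + 2 * (g * (q * q))"
    "(2 * \<bar>b\<bar> + 2 * \<bar>g\<bar> + 2) * (p * p + q * q) =
       2 * (\<bar>b\<bar> * (p * p + q * q)) + 2 * (\<bar>g\<bar> * (p * p + q * q)) + 2 * (p * p + q * q)"
    by (simp_all add: algebra_simps)
  ultimately show ?thesis using b_term g_term pq_term by (smt (verit))
qed

lemma linear_system_zero_solution:
  fixes p q :: "real \<Rightarrow> real"
  assumes p0: "p 0 = 0" and q0: "q 0 = 0"
    and dp: "\<And>s. s \<in> {0..t} \<Longrightarrow> (p has_real_derivative b * q s) (at s within {0..t})"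
    and dq: "\<And>s. s \<in> {0..t} \<Longrightarrow> (q has_real_derivative - p s + g * q s) (at s within {0..t})"
    and s: "s \<in> {0..t}"
  shows "p s = 0 \<and> q s = 0"
proof -
  define K where "K = 2 * \<bar>b\<bar> + 2 * \<bar>g\<bar> + 2"
  define E where "E r = exp (- K * r) * (p r * p r + q r * q r)" for r
  define E' where "E' r = exp (- K * r) *
    (- K * (p r * p r + q r * q r) + 2 * p r * (b * q r) + 2 * q r * (- p r + g * q r))" for r
  have dE: "(E has_real_derivative E' r) (at r within {0..t})" if "r \<in> {0..t}" for r
    unfolding E_def [abs_def] E'_def
    by (rule derivative_eq_intros dp dq that refl)+ (simp add: algebra_simps)
  have E'_nonpos: "E' r \<le> 0" for r
  proof -
    have "2 * p r * (b * q r) + 2 * q r * (- p r + g * q r) \<le> K * (p r * p r + q r * q r)"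
      unfolding K_def by (rule linear_energy_bound)
    then show ?thesis unfolding E'_def by (intro mult_nonneg_nonpos) auto
  qed
  have cont: "continuous_on {0..t} E"
    using dE by (intro continuous_on_vector_derivative)
      (simp add: has_real_derivative_iff_has_vector_derivative)
  have "E s \<le> E 0"
  proof (rule DERIV_nonpos_imp_decreasing_open[of 0 s])
    fix r assume r: "0 < r" "r < s"
    then have "(E has_real_derivative E' r) (at r)"
      using dE[of r] s at_within_Icc_at[of 0 r t] by auto
    then show "\<exists>y. (E has_real_derivative y) (at r) \<and> y \<le> 0" using E'_nonpos by blast
  qed (use s cont in \<open>auto intro: continuous_on_subset\<close>)
  then have "p s * p s + q s * q s \<le> 0"
    using p0 q0 by (simp add: E_def mult_le_0_iff)
  then show ?thesis by (simp add: sum_squares_le_zero_iff)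
qed

lemma has_vector_derivative_fst:
  "(\<phi> has_vector_derivative d) F \<Longrightarrow> ((\<lambda>s. fst (\<phi> s)) has_real_derivative fst d) F"
  unfolding has_vector_derivative_def has_field_derivative_def
  by (drule has_derivative_fst) (simp add: mult_commute_abs)

lemma has_vector_derivative_snd:
  "(\<phi> has_vector_derivative d) F \<Longrightarrow> ((\<lambda>s. snd (\<phi> s)) has_real_derivative snd d) F"
  unfolding has_vector_derivative_def has_field_derivative_def
  by (drule has_derivative_snd) (simp add: mult_commute_abs)

lemma Zm_solution_eq_orbit:
  assumes b: "b \<noteq> 0" and init: "\<phi> 0 = (x, 0)"
    and der: "\<forall>s\<in>{0..t}. (\<phi> has_vector_derivative Zm b g (\<phi> s)) (at s within {0..t})"
    and s: "s \<in> {0..t}"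
  shows "\<phi> s = (orbit_fst b g x s, orbit_snd b g x s)"
proof -
  define p where "p r = fst (\<phi> r) - orbit_fst b g x r" for r
  define q where "q r = snd (\<phi> r) - orbit_snd b g x r" for r
  have "p s = 0 \<and> q s = 0"
  proof (rule linear_system_zero_solution[OF _ _ _ _ s])
    fix r assume r: "r \<in> {0..t}"
    have "(p has_real_derivative fst (Zm b g (\<phi> r)) - (-1 + b * orbit_snd b g x r))
        (at r within {0..t})"
      unfolding p_def [abs_def] using der r
      by (intro DERIV_diff has_vector_derivative_fst
          has_field_derivative_at_within[OF has_real_derivative_orbit_fst[OF b]]) auto
    then show "(p has_real_derivative b * q r) (at r within {0..t})"
      by (simp add: Zm_def q_def algebra_simps)
    have "(q has_real_derivative snd (Zm b g (\<phi> r)) -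
        (g * orbit_snd b g x r - orbit_fst b g x r)) (at r within {0..t})"
      unfolding q_def [abs_def] using der r
      by (intro DERIV_diff has_vector_derivative_snd
          has_field_derivative_at_within[OF has_real_derivative_orbit_snd'[OF b]]) auto
    then show "(q has_real_derivative - p r + g * q r) (at r within {0..t})"
      by (simp add: Zm_def p_def q_def algebra_simps)
  qed (use init in \<open>simp_all add: p_def q_def\<close>)
  then show ?thesis by (simp add: p_def q_def prod_eq_iff)
qed

definition is_return_time :: "real \<Rightarrow> real \<Rightarrow> real \<Rightarrow> real \<Rightarrow> bool" where
  "is_return_time b g x t \<longleftrightarrow>
     0 < t \<and> orbit_snd b g x t = 0 \<and> (\<forall>s\<in>{0<..<t}. orbit_snd b g x s \<noteq> 0)"

definition return_time :: "real \<Rightarrow> real \<Rightarrow> real \<Rightarrow> real" where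
  "return_time b g x = (SOME t. is_return_time b g x t)"

lemma is_return_time_unique:
  "is_return_time b g x t \<Longrightarrow> is_return_time b g x t' \<Longrightarrow> t = t'"
  unfolding is_return_time_def by (cases t t' rule: linorder_cases) auto

lemma return_time_eqI: "is_return_time b g x t \<Longrightarrow> return_time b g x = t"
  unfolding return_time_def by (metis is_return_time_unique someI)

lemma first_return_imp_return_time:
  assumes b: "b \<noteq> 0" and fr: "first_return b g x y"
  shows "\<exists>t. is_return_time b g x t \<and> y = orbit_fst b g x t \<and> y < 0"
proof -
  from fr obtain \<phi> t where y: "y < 0" and t: "0 < t" and init: "\<phi> 0 = (x, 0)"
    and final: "\<phi> t = (y, 0)"
    and der: "\<forall>s\<in>{0..t}. (\<phi> has_vector_derivative Zm b g (\<phi> s)) (at s within {0..t})"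
    and off_axis: "\<forall>s\<in>{0<..<t}. snd (\<phi> s) \<noteq> 0"
    unfolding first_return_def by blast
  have \<phi>: "\<phi> s = (orbit_fst b g x s, orbit_snd b g x s)" if "s \<in> {0..t}" for s
    using Zm_solution_eq_orbit[OF b init der that] .
  have "is_return_time b g x t"
    unfolding is_return_time_def using t final off_axis \<phi> by auto
  moreover have "y = orbit_fst b g x t" using final \<phi>[of t] t by simp
  ultimately show ?thesis using y by blast
qed

lemma first_return_Pi:
  assumes b: "b \<noteq> 0" and x: "x \<noteq> 0" and fr: "first_return b g x y"
  shows "Pi b g x = y" and "y < 0" and "is_return_time b g x (return_time b g x)"
    and "Pi b g x = orbit_fst b g x (return_time b g x)"
proof -
  obtain t where t: "is_return_time b g x t" "y = orbit_fst b g x t" "y < 0"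
    using first_return_imp_return_time[OF b fr] by blast
  have "(THE y. first_return b g x y) = y"
  proof (rule the_equality)
    fix y' assume "first_return b g x y'"
    then obtain t' where "is_return_time b g x t'" "y' = orbit_fst b g x t'"
      using first_return_imp_return_time[OF b] by blast
    then show "y' = y" using t is_return_time_unique by blast
  qed (rule fr)
  then show "Pi b g x = y" using x by (simp add: Pi_def)
  show "y < 0" by fact
  show "is_return_time b g x (return_time b g x)" using t return_time_eqI by simp
  show "Pi b g x = orbit_fst b g x (return_time b g x)"
    using t return_time_eqI \<open>Pi b g x = y\<close> by simp
qed

lemma linear_ode_solution_exp:
  fixes f :: "real \<Rightarrow> real"
  assumes "\<And>s. (f has_real_derivative c * f s) (at s)"
  shows "f s = exp (c * s) * f 0"
proof -
  have "((\<lambda>s. exp (- c * s) * f s) has_real_derivative 0) (at r)" for r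
    by (auto intro!: derivative_eq_intros assms simp: algebra_simps)
  then have "exp (- c * s) * f s = exp (- c * 0) * f 0"
    using DERIV_isconst_all[of "\<lambda>s. exp (- c * s) * f s" s 0] by blast
  then show ?thesis by (simp add: exp_minus field_simps)
qed

definition Wpoly :: "real \<Rightarrow> real \<Rightarrow> real \<Rightarrow> real" where
  "Wpoly b g u = b * u * u - g * u + 1"

text \<open>A real root \<open>r\<close> of \<open>Wpoly b g\<close> gives an invariant line of \<open>Z\<^sup>-\<close> through \<open>(r, 0)\<close>;
  an orbit starting at \<open>(x, 0)\<close> with \<open>x > r\<close> cannot cross it to reach the negative half-axis.\<close>

lemma orbit_root_line:
  assumes b: "b \<noteq> 0" and r: "Wpoly b g r = 0"
  shows "orbit_fst b g x s - r - (g - b * r) * orbit_snd b g x s = exp ((g - b * r) * s) * (x - r)"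
proof -
  define l where "l = g - b * r"
  define f where "f s = orbit_fst b g x s - r - l * orbit_snd b g x s" for s
  have "(f has_real_derivative l * f s) (at s)" for s
  proof -
    have "(f has_real_derivative (-1 + b * orbit_snd b g x s) -
        l * (g * orbit_snd b g x s - orbit_fst b g x s)) (at s)"
      unfolding f_def [abs_def]
      by (auto intro!: derivative_eq_intros has_real_derivative_orbit_fst
          has_real_derivative_orbit_snd' b)
    moreover have "(-1 + b * orbit_snd b g x s) - l * (g * orbit_snd b g x s - orbit_fst b g x s) =
        l * f s + (l * l - g * l + b) * orbit_snd b g x s - (1 - l * r)"
      by (simp add: f_def algebra_simps)
    moreover have "l * l - g * l + b = b * Wpoly b g r" "1 - l * r = Wpoly b g r"
      by (simp_all add: l_def Wpoly_def algebra_simps)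
    ultimately show ?thesis using r by simp
  qed
  then have "f s = exp (l * s) * f 0" by (rule linear_ode_solution_exp)
  then show ?thesis by (simp add: f_def l_def)
qed

lemma first_return_Wpoly_pos:
  assumes b: "b \<noteq> 0" and x: "0 < x" and fr: "first_return b g x y"
  shows "Wpoly b g x > 0"
proof (rule ccontr)
  obtain t where t: "orbit_snd b g x t = 0" and y: "orbit_fst b g x t < 0"
    using first_return_imp_return_time[OF b fr] by (auto simp: is_return_time_def)
  assume "\<not> Wpoly b g x > 0"
  moreover have "continuous_on {0..x} (Wpoly b g)"
    unfolding Wpoly_def by (intro continuous_intros)
  ultimately obtain r where r: "0 \<le> r" "r \<le> x" "Wpoly b g r = 0"
    using IVT2'[of "Wpoly b g" x 0 0] x by (auto simp: Wpoly_def)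
  then have "r \<noteq> 0" by (auto simp: Wpoly_def)
  have "orbit_fst b g x t - r = exp ((g - b * r) * t) * (x - r)"
    using orbit_root_line[OF b r(3), of x t] t by simp
  also have "\<dots> \<ge> 0" using r by simp
  finally show False using y r \<open>r \<noteq> 0\<close> by simp
qed

section \<open>Differentiability of the half-map\<close>

lemma orbit_snd_neg_near_0:
  assumes b: "b \<noteq> 0" and x: "0 < x"
  obtains d where "0 < d" and "\<And>x' s. x / 2 \<le> x' \<Longrightarrow> 0 < s \<Longrightarrow> s \<le> d \<Longrightarrow> orbit_snd b g x' s < 0"
proof -
  have "open {r. 0 < gcos b g r \<and> gsin b g r < x / 2 * gcos b g r}"
    by (intro open_Collect_conj open_Collect_less continuous_intros
        continuous_at_imp_continuous_on ballI isCont_gsin isCont_gcos)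
  then obtain e where e: "0 < e"
    and ball: "ball 0 e \<subseteq> {r. 0 < gcos b g r \<and> gsin b g r < x / 2 * gcos b g r}"
    by (rule openE) (use x in auto)
  show ?thesis
  proof
    show "0 < e / 2" using e by simp
    fix x' s assume x': "x / 2 \<le> x'" and s: "0 < s" "s \<le> e / 2"
    have "orbit_snd b g x' s < orbit_snd b g x' 0"
    proof (rule DERIV_neg_imp_decreasing[OF s(1)])
      fix r assume "0 \<le> r" "r \<le> s"
      then have "r \<in> ball 0 e" using s e by simp
      then have "0 < gcos b g r" "gsin b g r < x / 2 * gcos b g r" using ball by auto
      moreover have "x / 2 * gcos b g r \<le> x' * gcos b g r"
        using x' \<open>0 < gcos b g r\<close> by (simp add: mult_right_mono)
      ultimately show "\<exists>y. (orbit_snd b g x' has_real_derivative y) (at r) \<and> y < 0"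
        by (intro exI[of _ "gsin b g r - x' * gcos b g r"] conjI has_real_derivative_orbit_snd b)
          linarith
    qed
    then show "orbit_snd b g x' s < 0" by simp
  qed
qed

lemma orbit_snd_neg_before_return:
  assumes b: "b \<noteq> 0" and x: "0 < x" and t: "is_return_time b g x t" and s: "0 < s" "s < t"
  shows "orbit_snd b g x s < 0"
proof (rule ccontr)
  obtain d where d: "0 < d" and near_0: "\<And>x' s. x / 2 \<le> x' \<Longrightarrow> 0 < s \<Longrightarrow> s \<le> d \<Longrightarrow> orbit_snd b g x' s < 0"
    using orbit_snd_neg_near_0[OF b x] by blast
  have near_0_x: "orbit_snd b g x r < 0" if "0 < r" "r \<le> d" for r
    using near_0[of x r] x that by simp
  assume "\<not> orbit_snd b g x s < 0"
  moreover from this have "d < s" using near_0_x[of s] s by force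
  ultimately obtain z where z: "d \<le> z" "z \<le> s" "orbit_snd b g x z = 0"
    using IVT'[of "orbit_snd b g x" d 0 s] near_0_x[of d] d continuous_on_orbit_snd[OF b] by force
  then show False using t s d unfolding is_return_time_def by force
qed

lemma return_time_lower_bound:
  assumes b: "b \<noteq> 0" and x: "0 < x" and t: "is_return_time b g x t" and h: "0 < h" "h < t"
  obtains \<delta> where "0 < \<delta>" and "\<And>x' t'. \<bar>x' - x\<bar> < \<delta> \<Longrightarrow> is_return_time b g x' t' \<Longrightarrow> t - h < t'"
proof -
  obtain d where d: "0 < d" and near_0: "\<And>x' s. x / 2 \<le> x' \<Longrightarrow> 0 < s \<Longrightarrow> s \<le> d \<Longrightarrow> orbit_snd b g x' s < 0"
    using orbit_snd_neg_near_0[OF b x] by blast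
  define I where "I = {min d (t - h)..t - h}"
  have I: "compact I" "I \<noteq> {}" "\<And>s. s \<in> I \<Longrightarrow> 0 < s \<and> s < t"
    using d h by (auto simp: I_def)
  obtain m where "m \<in> I" and m_max: "\<And>s. s \<in> I \<Longrightarrow> orbit_snd b g x s \<le> orbit_snd b g x m"
    using continuous_attains_sup[OF I(1,2) continuous_on_orbit_snd[OF b]] by blast
  define M where "M = - orbit_snd b g x m"
  have M: "0 < M"
    using orbit_snd_neg_before_return[OF b x t] I(3) \<open>m \<in> I\<close> by (force simp: M_def)
  obtain k where "k \<in> I" and k_max: "\<And>s. s \<in> I \<Longrightarrow> \<bar>gsin b g s\<bar> \<le> \<bar>gsin b g k\<bar>"
    using continuous_attains_sup[OF I(1,2), of "\<lambda>s. \<bar>gsin b g s\<bar>"]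
    by (auto intro: continuous_at_imp_continuous_on continuous_intros isCont_gsin)
  define K where "K = \<bar>gsin b g k\<bar> + 1"
  have K: "0 < K" by (simp add: K_def add_nonneg_pos)
  show ?thesis
  proof
    show "0 < min (x / 2) (M / K)" using x M K by simp
    fix x' t'
    assume close: "\<bar>x' - x\<bar> < min (x / 2) (M / K)"
      and t': "is_return_time b g x' t'"
    have "orbit_snd b g x' s < 0" if s: "0 < s" "s \<le> t - h" for s
    proof (cases "s \<le> d")
      case True
      moreover have "x / 2 \<le> x'" using close by arith
      ultimately show ?thesis using near_0[of x' s] s by simp
    next
      case False
      then have "s \<in> I" using s by (simp add: I_def)
      have "\<bar>(x' - x) * gsin b g s\<bar> \<le> \<bar>x' - x\<bar> * K"
        using k_max[OF \<open>s \<in> I\<close>] by (simp add: K_def abs_mult mult_left_mono)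
      moreover have "\<bar>x' - x\<bar> * K < M"
        using close K by (simp add: pos_less_divide_eq)
      ultimately show ?thesis
        using m_max[OF \<open>s \<in> I\<close>] orbit_snd_shift[of b g x' s x] by (simp add: M_def)
    qed
    then show "t - h < t'" using t' unfolding is_return_time_def by force
  qed
qed

lemma return_time_upper_bound:
  assumes b: "b \<noteq> 0" and x: "0 < x" and t: "is_return_time b g x t"
    and y: "orbit_fst b g x t < 0" and h: "0 < h"
  obtains \<delta> where "0 < \<delta>" and "\<And>x' t'. \<bar>x' - x\<bar> < \<delta> \<Longrightarrow> is_return_time b g x' t' \<Longrightarrow> t' < t + h"
proof -
  obtain d where d: "0 < d" and near_0: "\<And>x' s. x / 2 \<le> x' \<Longrightarrow> 0 < s \<Longrightarrow> s \<le> d \<Longrightarrow> orbit_snd b g x' s < 0"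
    using orbit_snd_neg_near_0[OF b x] by blast
  have "(orbit_snd b g x has_real_derivative - orbit_fst b g x t) (at t)"
    using has_real_derivative_orbit_snd'[OF b, of g x t] t by (simp add: is_return_time_def)
  then obtain e where e: "0 < e" and crossing: "\<And>r. 0 < r \<Longrightarrow> r < e \<Longrightarrow> 0 < orbit_snd b g x (t + r)"
    using DERIV_pos_inc_right[of "orbit_snd b g x" _ t] y t by (force simp: is_return_time_def)
  define r where "r = min h (e / 2)"
  have r: "0 < r" "r \<le> h" "r < e" using h e by (auto simp: r_def)
  define V where "V = orbit_snd b g x (t + r)"
  define K where "K = \<bar>gsin b g (t + r)\<bar> + 1"
  have V: "0 < V" using crossing r by (simp add: V_def)
  have K: "0 < K" by (simp add: K_def add_nonneg_pos)
  show ?thesis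
  proof
    show "0 < min (x / 2) (V / K)" using x V K by simp
    fix x' t'
    assume close: "\<bar>x' - x\<bar> < min (x / 2) (V / K)" and t': "is_return_time b g x' t'"
    have "\<bar>(x' - x) * gsin b g (t + r)\<bar> \<le> \<bar>x' - x\<bar> * K"
      by (simp add: K_def abs_mult mult_left_mono)
    moreover have "\<bar>x' - x\<bar> * K < V" using close K by (simp add: pos_less_divide_eq)
    ultimately have pos: "0 < orbit_snd b g x' (t + r)"
      using orbit_snd_shift[of b g x' "t + r" x] by (simp add: V_def)
    define d' where "d' = min d t"
    have d': "0 < d'" "d' \<le> d" "d' < t + r" using d r t by (auto simp: d'_def is_return_time_def)
    have "x / 2 \<le> x'" using close by arith
    then have "orbit_snd b g x' d' < 0" using near_0[of x' d'] d' by simp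
    then obtain z where z: "d' \<le> z" "z \<le> t + r" "orbit_snd b g x' z = 0"
      using IVT'[of "orbit_snd b g x'" d' 0 "t + r"] pos d' continuous_on_orbit_snd[OF b] by force
    then have "z < t + r" using pos by (metis order.order_iff_strict less_irrefl)
    show "t' < t + h"
    proof (rule ccontr)
      assume "\<not> t' < t + h"
      then have "z \<in> {0<..<t'}" using z d' r \<open>z < t + r\<close> by auto
      then show False using z t' by (simp add: is_return_time_def)
    qed
  qed
qed

lemma isCont_return_time:
  assumes b: "b \<noteq> 0" and x: "0 < x" "x < c"
    and returns: "\<And>x'. x' \<in> {0<..<c} \<Longrightarrow> \<exists>y. first_return b g x' y"
  shows "isCont (return_time b g) x"
proof -
  have return_near: "\<forall>\<^sub>F x' in at x. is_return_time b g x' (return_time b g x')"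
  proof -
    have "\<forall>\<^sub>F x' in at x. x' \<in> {0<..<c}" using x by (intro eventually_at_in_open') auto
    then show ?thesis by eventually_elim (use returns first_return_Pi(3)[OF b] in force)
  qed
  define t where "t = return_time b g x"
  obtain y where fr: "first_return b g x y" using returns x by auto
  have x0: "x \<noteq> 0" using x by simp
  have t: "is_return_time b g x t" and y: "orbit_fst b g x t < 0"
    using first_return_Pi[OF b x0 fr] by (simp_all add: t_def)
  have close: "\<forall>\<^sub>F x' in at x. \<bar>x' - x\<bar> < \<delta>" if "0 < \<delta>" for \<delta>
    using that by (auto simp: eventually_at dist_real_def)
  show ?thesis
    unfolding isCont_def t_def[symmetric]
  proof (rule order_tendstoI)
    fix a assume "a < t"
    define h where "h = min (t - a) (t / 2)"
    have h: "0 < h" "h < t" "a \<le> t - h" using \<open>a < t\<close> t by (auto simp: h_def is_return_time_def)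
    obtain \<delta> where "0 < \<delta>" and lower: "\<And>x' t'. \<bar>x' - x\<bar> < \<delta> \<Longrightarrow> is_return_time b g x' t' \<Longrightarrow> t - h < t'"
      using return_time_lower_bound[OF b x(1) t h(1,2)] by blast
    show "\<forall>\<^sub>F x' in at x. a < return_time b g x' "
      using return_near close[OF \<open>0 < \<delta>\<close>] by eventually_elim (use lower h in fastforce)
  next
    fix a assume "t < a"
    obtain \<delta> where "0 < \<delta>" and upper: "\<And>x' t'. \<bar>x' - x\<bar> < \<delta> \<Longrightarrow> is_return_time b g x' t' \<Longrightarrow> t' < t + (a - t)"
      using return_time_upper_bound[OF b x(1) t y, of "a - t"] \<open>t < a\<close> by auto
    show "\<forall>\<^sub>F x' in at x. return_time b g x' < a"
      using return_near close[OF \<open>0 < \<delta>\<close>] by eventually_elim (use upper in fastforce)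
  qed
qed

lemma first_return_gsin_gcos:
  assumes b: "b \<noteq> 0" and x: "0 < x" and fr: "first_return b g x y"
  defines "t \<equiv> return_time b g x"
  shows "(1 - gcos b g t + g * gsin b g t) / b = x * gsin b g t"
    and "Pi b g x = x * gcos b g t - gsin b g t"
    and "gsin b g t \<noteq> 0"
proof -
  have x0: "x \<noteq> 0" using x by simp
  have "orbit_snd b g x t = 0"
    using first_return_Pi(3)[OF b x0 fr] by (simp add: t_def is_return_time_def)
  then show a: "(1 - gcos b g t + g * gsin b g t) / b = x * gsin b g t"
    by (simp add: orbit_snd_def)
  show Pi: "Pi b g x = x * gcos b g t - gsin b g t"
    using first_return_Pi(4)[OF b x0 fr] \<open>orbit_snd b g x t = 0\<close> by (simp add: t_def orbit_fst_def)
  show "gsin b g t \<noteq> 0"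
  proof
    assume "gsin b g t = 0"
    with a b have "Pi b g x = x" by (simp add: Pi)
    then show False using first_return_Pi(1,2)[OF b x0 fr] x by simp
  qed
qed

lemma return_map_derivative_identity:
  fixes b g x y C S :: real
  assumes C: "C = 1 + g * S - b * x * S" and y: "y = x * C - S"
  shows "(y * C - (x * (g * C - b * S) - C) * S) * Wpoly b g x = x * Wpoly b g y"
  unfolding Wpoly_def y C by algebra

text \<open>As \<open>orbit_snd b g x t = a t - x * gsin b g t\<close> with \<open>a\<close> independent of \<open>x\<close>, the return time
  is the inverse of \<open>t \<mapsto> a t / gsin b g t\<close>.\<close>

lemma has_real_derivative_return_time:
  assumes b: "b \<noteq> 0" and x: "0 < x" "x < c"
    and returns: "\<And>x'. x' \<in> {0<..<c} \<Longrightarrow> \<exists>y. first_return b g x' y"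
  shows "(return_time b g has_real_derivative - gsin b g (return_time b g x) / Pi b g x) (at x)"
proof -
  define a where "a s = (1 - gcos b g s + g * gsin b g s) / b" for s
  define t where "t = return_time b g x"
  define C where "C = gcos b g t"
  define S where "S = gsin b g t"
  have inverse: "a (return_time b g x') / gsin b g (return_time b g x') = x'"
    if x': "x' \<in> {0<..<c}" for x'
  proof -
    obtain y where fr: "first_return b g x' y" using returns x' by blast
    show ?thesis using first_return_gsin_gcos(1,3)[OF b _ fr] x' by (simp add: a_def)
  qed
  obtain y where fr: "first_return b g x y" using returns x by auto
  have aS: "a t = x * S" and Pi: "Pi b g x = x * C - S" and S: "S \<noteq> 0"
    using first_return_gsin_gcos[OF b x(1) fr] by (simp_all add: a_def t_def C_def S_def)
  have Pi_neg: "Pi b g x < 0" using first_return_Pi(1,2)[OF b _ fr] x by simp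
  have "(a has_real_derivative S) (at t)"
    unfolding a_def [abs_def] S_def using b
    by (auto intro!: derivative_eq_intros has_real_derivative_gsin has_real_derivative_gcos
        simp: field_simps)
  then have "((\<lambda>s. a s / gsin b g s) has_real_derivative (S * S - a t * C) / (S * S)) (at t)"
    unfolding C_def S_def using S
    by (intro DERIV_divide has_real_derivative_gsin) (simp_all add: S_def)
  moreover have "(S * S - a t * C) / (S * S) = - Pi b g x / S"
    using S by (simp add: aS Pi field_simps)
  ultimately have "(return_time b g has_real_derivative inverse (- Pi b g x / S)) (at x)"
    using Pi_neg S inverse x
    by (intro DERIV_inverse_function[where f = "\<lambda>s. a s / gsin b g s" and a = 0 and b = c])
      (auto simp: t_def intro: isCont_return_time[OF b x returns])
  then show ?thesis by (simp add: inverse_eq_divide S_def t_def)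
qed

lemma has_real_derivative_Pi:
  assumes b: "b \<noteq> 0" and x: "0 < x" "x < c"
    and returns: "\<And>x'. x' \<in> {0<..<c} \<Longrightarrow> \<exists>y. first_return b g x' y"
  shows "(Pi b g has_real_derivative x * Wpoly b g (Pi b g x) / (Pi b g x * Wpoly b g x)) (at x)"
proof -
  define T where "T = return_time b g"
  define G where "G x' = x' * gcos b g (T x') - gsin b g (T x')" for x'
  define y where "y = Pi b g x"
  define C where "C = gcos b g (T x)"
  define S where "S = gsin b g (T x)"
  obtain y' where fr: "first_return b g x y'" using returns x by auto
  have y: "y = x * C - S" "y < 0" and C: "C = 1 + g * S - b * x * S"
    using first_return_gsin_gcos(1,2)[OF b x(1) fr] first_return_Pi(1,2)[OF b _ fr] x b
    by (simp_all add: y_def C_def S_def T_def field_simps)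
  have dT: "(T has_real_derivative - S / y) (at x)"
    using has_real_derivative_return_time[OF b x returns] by (simp add: T_def S_def y_def)
  have "(G has_real_derivative C + (x * (g * C - b * S) - C) * (- S / y)) (at x)"
    unfolding G_def [abs_def]
    by (rule derivative_eq_intros DERIV_chain2[OF has_real_derivative_gcos dT]
        DERIV_chain2[OF has_real_derivative_gsin dT] refl)+
      (simp add: C_def S_def algebra_simps)
  moreover have "C + (x * (g * C - b * S) - C) * (- S / y) = x * Wpoly b g y / (y * Wpoly b g x)"
  proof -
    have "(y * C - (x * (g * C - b * S) - C) * S) * Wpoly b g x = x * Wpoly b g y"
      using C y(1) by (rule return_map_derivative_identity)
    moreover have "Wpoly b g x \<noteq> 0" using first_return_Wpoly_pos[OF b x(1) fr] by simp
    ultimately show ?thesis using y(2) by (simp add: field_simps)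
  qed
  moreover have "\<forall>\<^sub>F x' in nhds x. x' \<in> {0<..<c}"
    using x by (intro eventually_nhds_in_open) auto
  then have "\<forall>\<^sub>F x' in nhds x. Pi b g x' = G x'"
  proof eventually_elim
    case (elim x')
    then obtain y' where "first_return b g x' y'" using returns by blast
    then show ?case using first_return_gsin_gcos(2)[OF b] elim by (simp add: G_def T_def)
  qed
  ultimately show ?thesis
    using DERIV_cong_ev[OF refl _ refl, of "Pi b g" G] by (simp add: y_def)
qed

section \<open>The derivative of \<open>Itilde\<close> and the sign of \<open>Delta\<close>\<close>

lemma has_real_derivative_integral_between:
  fixes p f :: "real \<Rightarrow> real"
  assumes f: "continuous_on {a..b} f"
    and p: "(p has_real_derivative P) (at x)"
    and x: "a < p x" "p x < x" "x < b"
  shows "((\<lambda>z. integral {p z..z} f) has_real_derivative f x - f (p x) * P) (at x)"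
proof -
  define F where "F z = integral {a..z} f" for z
  have dF: "(F has_real_derivative f z) (at z)" if "a < z" "z < b" for z
  proof -
    have "(F has_vector_derivative f z) (at z within {a..b})"
      unfolding F_def [abs_def] by (rule integral_has_vector_derivative[OF f]) (use that in auto)
    then show ?thesis
      using at_within_Icc_at[OF that] by (simp add: has_real_derivative_iff_has_vector_derivative)
  qed
  have "((\<lambda>z. F z - F (p z)) has_real_derivative f x - f (p x) * P) (at x)"
    using DERIV_diff[OF dF DERIV_chain2[OF dF p]] x by auto
  moreover have "\<forall>\<^sub>F z in nhds x. integral {p z..z} f = F z - F (p z)"
  proof -
    have p_tendsto: "(p \<longlongrightarrow> p x) (nhds x)"
      using DERIV_isCont[OF p] by (simp add: isCont_def tendsto_at_iff_tendsto_nhds)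
    have "\<forall>\<^sub>F z in nhds x. a < p z"
      using x by (intro order_tendstoD(1)[OF p_tendsto])
    moreover have "\<forall>\<^sub>F z in nhds x. 0 < z - p z"
      using x by (intro order_tendstoD(1)[OF tendsto_diff[OF filterlim_ident p_tendsto]]) simp
    moreover have "\<forall>\<^sub>F z in nhds x. z \<in> {a<..<b}"
      using x by (intro eventually_nhds_in_open) auto
    ultimately show ?thesis
    proof eventually_elim
      case (elim z)
      have "f integrable_on {a..z}"
        using f elim by (intro integrable_continuous_real) (auto intro: continuous_on_subset)
      then have "integral {a..p z} f + integral {p z..z} f = integral {a..z} f"
        using elim by (intro Henstock_Kurzweil_Integration.integral_combine) auto
      then show ?case unfolding F_def by simp
    qed
  qed
  ultimately show ?thesis
    using DERIV_cong_ev[OF refl _ refl, of "\<lambda>z. integral {p z..z} f" "\<lambda>z. F z - F (p z)"] by simp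
qed

lemma affine_pos_between:
  fixes k a u v w :: real
  assumes "v \<le> u" "u \<le> w" "0 < k + a * v" "0 < k + a * w"
  shows "0 < k + a * u"
proof (cases "0 \<le> a")
  case True
  then have "a * v \<le> a * u" using assms by (simp add: mult_left_mono)
  then show ?thesis using assms by linarith
next
  case False
  then have "a * w \<le> a * u" using assms by (simp add: mult_left_mono_neg)
  then show ?thesis using assms by linarith
qed

lemma affine_pos_on_open_interval:
  fixes k a v w :: real
  assumes v: "0 < k + a * v" and w: "0 < k + a * w"
  obtains l r where "l < v" "w < r" "\<And>u. u \<in> {l..r} \<Longrightarrow> 0 < k + a * u"
proof -
  have "open {u. 0 < k + a * u}" by (intro open_Collect_less continuous_intros)
  then obtain e1 e2 where e: "0 < e1" "ball v e1 \<subseteq> {u. 0 < k + a * u}"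
    "0 < e2" "ball w e2 \<subseteq> {u. 0 < k + a * u}"
    using v w openE[of "{u. 0 < k + a * u}"] by (metis mem_Collect_eq)
  then have l: "0 < k + a * (v - e1 / 2)" and r: "0 < k + a * (w + e2 / 2)"
    by (auto simp: dist_real_def subset_iff)
  show ?thesis
  proof (rule that[of "v - e1 / 2" "w + e2 / 2"])
    fix u assume "u \<in> {v - e1 / 2..w + e2 / 2}"
    then show "0 < k + a * u" using l r by (intro affine_pos_between[of "v - e1 / 2" u "w + e2 / 2"]) auto
  qed (use e in auto)
qed

lemma in_zero_b_D:
  assumes "in_zero_b B ap dp bm gm x"
  obtains c where "0 < x" "x < c"
    and "\<And>x'. x' \<in> {0<..<c} \<Longrightarrow> \<exists>y. first_return bm gm x' y"
    and "\<And>u. u \<in> {Pi bm gm x..x} \<Longrightarrow> 0 < Xsl B ap dp u"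
proof -
  obtain c where c: "0 < x" "x < c" "{0..<c} \<subseteq> goodset B ap dp bm gm"
    using assms unfolding in_zero_b_def by blast
  then have "x' \<in> goodset B ap dp bm gm" if "x' \<in> {0<..<c}" for x'
    using that by auto
  then have "\<exists>y. first_return bm gm x' y" if "x' \<in> {0<..<c}" for x'
    using that by (auto simp: goodset_def PiDom_def)
  moreover have "x \<in> goodset B ap dp bm gm" using c by auto
  then have "0 < Xsl B ap dp u" if "u \<in> {Pi bm gm x..x}" for u
    using that by (auto simp: goodset_def)
  ultimately show ?thesis using c that by blast
qed

lemma in_zero_b_Xsl_pos:
  assumes bm: "bm \<noteq> 0" and x_in: "in_zero_b B ap dp bm gm x"
  shows "0 < Xsl B ap dp x"
proof -
  obtain c where x: "0 < x" "x < c"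
    and returns: "\<And>x'. x' \<in> {0<..<c} \<Longrightarrow> \<exists>y. first_return bm gm x' y"
    and X_pos: "\<And>u. u \<in> {Pi bm gm x..x} \<Longrightarrow> 0 < Xsl B ap dp u"
    using in_zero_b_D[OF x_in] by blast
  obtain y where fr: "first_return bm gm x y" using returns x by auto
  then have "Pi bm gm x < x" using first_return_Pi(1,2)[OF bm _ fr] x by simp
  then show ?thesis by (intro X_pos) simp
qed

lemma Itilde_derivative_identity:
  assumes dp: "1 + dp \<noteq> 0" and X: "Xsl B ap dp x \<noteq> 0" "Xsl B ap dp y \<noteq> 0"
    and y: "y \<noteq> 0" and W: "Wpoly bm gm x \<noteq> 0"
  shows "(x / Xsl B ap dp x - y / Xsl B ap dp y * (x * Wpoly bm gm y / (y * Wpoly bm gm x))) *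
      ((1 + dp) * Xsl B ap dp x * Xsl B ap dp y * Wpoly bm gm x) =
    x * (x - y) * Deltabar B ap dp bm gm x y"
proof -
  have "(x / Xsl B ap dp x - y / Xsl B ap dp y * (x * Wpoly bm gm y / (y * Wpoly bm gm x))) *
      ((1 + dp) * Xsl B ap dp x * Xsl B ap dp y * Wpoly bm gm x) =
    x * ((Xsl B ap dp y * (1 + dp)) * Wpoly bm gm x - (Xsl B ap dp x * (1 + dp)) * Wpoly bm gm y)"
    using X y W by (simp add: field_simps)
  also have "\<dots> = x * ((B - dp + ap * y) * Wpoly bm gm x - (B - dp + ap * x) * Wpoly bm gm y)"
    using dp by (simp add: Xsl_def)
  also have "\<dots> = x * (x - y) * Deltabar B ap dp bm gm x y"
    by (simp add: Wpoly_def Deltabar_def algebra_simps)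
  finally show ?thesis .
qed

lemma sgn_eq_of_mult_pos:
  fixes a b k m :: real
  assumes "0 < k" "0 < m" "a * k = m * b"
  shows "sgn a = sgn b"
proof -
  have "sgn a = sgn (a * k)" using assms(1) by (simp add: sgn_mult)
  also have "\<dots> = sgn (m * b)" using assms(3) by simp
  also have "\<dots> = sgn b" using assms(2) by (simp add: sgn_mult)
  finally show ?thesis .
qed

lemma has_real_derivative_Itilde_sgn:
  assumes dp: "0 < dp" and bm: "bm \<noteq> 0" and x_in: "in_zero_b B ap dp bm gm x"
  shows "\<exists>D. (Itilde B ap dp bm gm has_real_derivative D) (at x) \<and>
    sgn D = sgn (Delta B ap dp bm gm x)"
proof -
  obtain c where x: "0 < x" "x < c"
    and returns: "\<And>x'. x' \<in> {0<..<c} \<Longrightarrow> \<exists>y. first_return bm gm x' y"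
    and X_pos: "\<And>u. u \<in> {Pi bm gm x..x} \<Longrightarrow> 0 < Xsl B ap dp u"
    using in_zero_b_D[OF x_in] by blast
  define X where "X = Xsl B ap dp"
  define y where "y = Pi bm gm x"
  obtain y' where fr: "first_return bm gm x y'" using returns x by auto
  have y: "y < 0" using first_return_Pi(1,2)[OF bm _ fr] x by (simp add: y_def)
  have Wx: "0 < Wpoly bm gm x" using first_return_Wpoly_pos[OF bm x(1) fr] .
  have Xx: "0 < X x" and Xy: "0 < X y" using X_pos y x by (auto simp: X_def y_def)
  have X_affine: "X u = (B - dp) / (1 + dp) + ap / (1 + dp) * u" for u
    by (simp add: X_def Xsl_def add_divide_distrib)
  obtain a b where ab: "a < y" "x < b" and X_pos_ab: "\<And>u. u \<in> {a..b} \<Longrightarrow> 0 < X u"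
    using affine_pos_on_open_interval[of "(B - dp) / (1 + dp)" "ap / (1 + dp)" y x] Xx Xy
    unfolding X_affine by blast
  define D where "D = x / X x - y / X y * (x * Wpoly bm gm y / (y * Wpoly bm gm x))"
  have deriv: "(Itilde B ap dp bm gm has_real_derivative D) (at x)"
  proof -
    have "continuous_on {a..b} (\<lambda>u. u / X u)"
    proof (intro continuous_on_divide continuous_on_id ballI)
      show "continuous_on {a..b} X" unfolding X_affine by (intro continuous_intros)
      show "X u \<noteq> 0" if "u \<in> {a..b}" for u using X_pos_ab[OF that] by simp
    qed
    from has_real_derivative_integral_between[OF this has_real_derivative_Pi[OF bm x returns]]
    show ?thesis using ab y x by (simp add: Itilde_def [abs_def] D_def X_def y_def)
  qed
  have pos: "0 < (1 + dp) * X x * X y * Wpoly bm gm x" "0 < x * (x - y)"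
    using dp Xx Xy Wx x y by simp_all
  have D_eq: "D * ((1 + dp) * X x * X y * Wpoly bm gm x) = x * (x - y) * Delta B ap dp bm gm x"
    unfolding D_def X_def Delta_def y_def
    by (rule Itilde_derivative_identity) (use dp Xx Xy Wx y in \<open>simp_all add: X_def y_def\<close>)
  show ?thesis using deriv sgn_eq_of_mult_pos[OF pos D_eq] by blast
qed

lemma Delta_eq_root_distance:
  assumes bm: "bm \<noteq> 0" and X: "B - dp + ap * x \<noteq> 0"
  obtains y0 where "Deltabar B ap dp bm gm x y0 = 0"
    and "Delta B ap dp bm gm x = bm * (B - dp + ap * x) * (Pi bm gm x - y0)"
proof
  define K where "K = bm * (B - dp + ap * x)"
  have K: "K \<noteq> 0" using bm X by (simp add: K_def)
  have linear: "Deltabar B ap dp bm gm x y = K * y + (bm * (B - dp) * x - ap - gm * (B - dp))" for y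
    by (simp add: Deltabar_def K_def algebra_simps)
  define y0 where "y0 = - (bm * (B - dp) * x - ap - gm * (B - dp)) / K"
  show "Deltabar B ap dp bm gm x y0 = 0" using K by (simp add: linear y0_def)
  have "Delta B ap dp bm gm x = K * (Pi bm gm x - y0)"
    using K by (simp add: Delta_def linear y0_def field_simps)
  then show "Delta B ap dp bm gm x = bm * (B - dp + ap * x) * (Pi bm gm x - y0)"
    by (simp add: K_def)
qed

lemma Delta_sgn_curve_above:
  assumes bm: "bm \<noteq> 0" and X: "0 < B - dp + ap * x"
    and above: "\<forall>y. Deltabar B ap dp bm gm x y = 0 \<longrightarrow> y > Pi bm gm x"
  shows "sgn (Delta B ap dp bm gm x) = - sgn bm"
proof -
  obtain y0 where "Deltabar B ap dp bm gm x y0 = 0"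
    and Delta: "Delta B ap dp bm gm x = bm * (B - dp + ap * x) * (Pi bm gm x - y0)"
    using Delta_eq_root_distance[OF bm] X by (metis less_irrefl)
  then have "Pi bm gm x - y0 < 0" using above by simp
  then show ?thesis using X by (simp add: Delta sgn_mult)
qed

lemma Delta_sgn_curve_below:
  assumes bm: "bm \<noteq> 0" and X: "0 < B - dp + ap * x"
    and below: "\<forall>y. Deltabar B ap dp bm gm x y = 0 \<longrightarrow> y < Pi bm gm x"
  shows "sgn (Delta B ap dp bm gm x) = sgn bm"
proof -
  obtain y0 where "Deltabar B ap dp bm gm x y0 = 0"
    and Delta: "Delta B ap dp bm gm x = bm * (B - dp + ap * x) * (Pi bm gm x - y0)"
    using Delta_eq_root_distance[OF bm] X by (metis less_irrefl)
  then have "0 < Pi bm gm x - y0" using below by simp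
  then show ?thesis using X by (simp add: Delta sgn_mult)
qed

theorem lemma3p2:
  fixes B ap bp gp dp bm gm :: real and J :: "real set"
  assumes "B > dp" and "dp > 0"
    and "bm \<noteq> 0" and "gm > 0"
    and "is_interval J"
    and "\<forall>x\<in>J. in_zero_b B ap dp bm gm x"
  shows
   "(bm < 0 \<longrightarrow>
      ((\<forall>x\<in>J. \<forall>y. Deltabar B ap dp bm gm x y = 0 \<longrightarrow> y > Pi bm gm x) \<longrightarrow>
         (\<forall>x\<in>J. Delta B ap dp bm gm x > 0 \<and>
            (\<exists>D. (Itilde B ap dp bm gm has_real_derivative D) (at x) \<and> D > 0))) \<and>
      ((\<forall>x\<in>J. \<forall>y. Deltabar B ap dp bm gm x y = 0 \<longrightarrow> y < Pi bm gm x) \<longrightarrow>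
         (\<forall>x\<in>J. Delta B ap dp bm gm x < 0 \<and>
            (\<exists>D. (Itilde B ap dp bm gm has_real_derivative D) (at x) \<and> D < 0)))) \<and>
    (bm > 0 \<longrightarrow>
      ((\<forall>x\<in>J. \<forall>y. Deltabar B ap dp bm gm x y = 0 \<longrightarrow> y > Pi bm gm x) \<longrightarrow>
         (\<forall>x\<in>J. Delta B ap dp bm gm x < 0 \<and>
            (\<exists>D. (Itilde B ap dp bm gm has_real_derivative D) (at x) \<and> D < 0))) \<and>
      ((\<forall>x\<in>J. \<forall>y. Deltabar B ap dp bm gm x y = 0 \<longrightarrow> y < Pi bm gm x) \<longrightarrow>
         (\<forall>x\<in>J. Delta B ap dp bm gm x > 0 \<and>
            (\<exists>D. (Itilde B ap dp bm gm has_real_derivative D) (at x) \<and> D > 0))))"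
proof -
  have X: "0 < B - dp + ap * x" if "x \<in> J" for x
  proof -
    have "0 < Xsl B ap dp x" using in_zero_b_Xsl_pos[OF assms(3)] assms(6) that by blast
    then show ?thesis using assms(2) by (simp add: Xsl_def zero_less_divide_iff)
  qed
  have deriv: "\<exists>D. (Itilde B ap dp bm gm has_real_derivative D) (at x) \<and>
      sgn D = sgn (Delta B ap dp bm gm x)" if "x \<in> J" for x
    using has_real_derivative_Itilde_sgn[OF assms(2,3)] assms(6) that by blast
  have above: "sgn (Delta B ap dp bm gm x) = - sgn bm"
    if "x \<in> J" "\<forall>y. Deltabar B ap dp bm gm x y = 0 \<longrightarrow> y > Pi bm gm x" for x
    using Delta_sgn_curve_above[OF assms(3) X] that by blast
  have below: "sgn (Delta B ap dp bm gm x) = sgn bm"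
    if "x \<in> J" "\<forall>y. Deltabar B ap dp bm gm x y = 0 \<longrightarrow> y < Pi bm gm x" for x
    using Delta_sgn_curve_below[OF assms(3) X] that by blast
  show ?thesis
    using deriv above below by (auto simp: sgn_1_pos sgn_1_neg)
qed

end
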